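(* Let $(\rho,u)$ be a smooth solution with $\rho>0$ on $[0,T)\times\mathbb{T}$ of the one-dimensional topological model $$\rho_t+(\rho u)_x=0,\qquad u_t+uu_x=\int_{\mathbb{T}}\phi(x,y)(u(y)-u(x))\rho(y)\,dy,\qquad \phi(x,y)=\frac{h(|x-y|)}{|x-y|^{\alpha}d_\rho(x,y)},$$ with $0<\alpha<2$. Then $e:=u_x+\mathcal{L}_\phi\rho$ satisfies $e_t+(ue)_x=0$. Consequently $q=e/\rho$ satisfies $q_t+uq_x=0$.
   Context: $\mathbb{T}=\mathbb{R}/2\pi\mathbb{Z}$; $R_0>0$ and $h$ is a smooth even cutoff with $0\le h\le1$, $h=1$ on $[0,R_0]$, $h=0$ on $[2R_0,\infty)$. $d_\rho(x,y)=|\int_x^y\rho(t,z)\,dz|$ (time dependent through $\rho$). $\mathcal{L}_\phi f(x)=\mathrm{p.v.}\int\phi(x,y)(f(y)-f(x))\,dy$ (defined weakly by $\langle\mathcal{L}_\phi f,g\rangle=-\frac12\iint\phi(x,y)(f(x)-f(y))(g(x)-g(y))$). *)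

theory Defs
  imports "HOL-Analysis.Analysis"
begin

definition smooth_real :: "(real \<Rightarrow> real) \<Rightarrow> bool" where
  "smooth_real f \<longleftrightarrow> (\<forall>k x. ((deriv ^^ k) f) differentiable (at x))"

fun Ck2_on :: "nat \<Rightarrow> (real \<times> real) set \<Rightarrow> (real \<Rightarrow> real \<Rightarrow> real) \<Rightarrow> bool" where
  "Ck2_on 0 S f = continuous_on S (\<lambda>(t, x). f t x)"
| "Ck2_on (Suc k) S f =
     (\<exists>ft fx. (\<forall>(t, x)\<in>S. ((\<lambda>s. f s x) has_real_derivative ft t x) (at t)
                          \<and> ((\<lambda>y. f t y) has_real_derivative fx t x) (at x))
            \<and> Ck2_on k S ft \<and> Ck2_on k S fx)"

definition smooth2_on :: "(real \<times> real) set \<Rightarrow> (real \<Rightarrow> real \<Rightarrow> real) \<Rightarrow> bool" where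
  "smooth2_on S f \<longleftrightarrow> (\<forall>k. Ck2_on k S f)"

definition dt :: "(real \<Rightarrow> real \<Rightarrow> real) \<Rightarrow> real \<Rightarrow> real \<Rightarrow> real" where
  "dt f t x = deriv (\<lambda>s. f s x) t"
definition dx :: "(real \<Rightarrow> real \<Rightarrow> real) \<Rightarrow> real \<Rightarrow> real \<Rightarrow> real" where
  "dx f t x = deriv (\<lambda>y. f t y) x"

definition d_rho :: "(real \<Rightarrow> real \<Rightarrow> real) \<Rightarrow> real \<Rightarrow> real \<Rightarrow> real \<Rightarrow> real" where
  "d_rho \<rho> t x y = \<bar>integral {min x y..max x y} (\<rho> t)\<bar>"

definition phi_top :: "(real \<Rightarrow> real) \<Rightarrow> real \<Rightarrow> (real \<Rightarrow> real \<Rightarrow> real) \<Rightarrow> real \<Rightarrow> real \<Rightarrow> real \<Rightarrow> real" where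
  "phi_top h \<alpha> \<rho> t x y = h \<bar>x - y\<bar> / (\<bar>x - y\<bar> powr \<alpha> * d_rho \<rho> t x y)"

(* integral over the torus, written as y = x + z with z in [-pi,pi], truncated at |z| >= eps *)
definition trunc_int :: "real \<Rightarrow> (real \<Rightarrow> real) \<Rightarrow> real" where
  "trunc_int \<epsilon> F = integral {z. \<epsilon> \<le> \<bar>z\<bar> \<and> \<bar>z\<bar> \<le> pi} F"

definition pv_torus :: "(real \<Rightarrow> real) \<Rightarrow> real" where
  "pv_torus F = Lim (at_right 0) (\<lambda>\<epsilon>. trunc_int \<epsilon> F)"

definition L_op :: "(real \<Rightarrow> real \<Rightarrow> real) \<Rightarrow> (real \<Rightarrow> real) \<Rightarrow> real \<Rightarrow> real" where
  "L_op \<phi> f x = pv_torus (\<lambda>z. \<phi> x (x + z) * (f (x + z) - f x))"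

end

theory Submission
  imports Defs
begin

text \<open>
  Along the segment from x to x + z write f(x + z) - f(x) and the \<rho>-distance d_\<rho>(x, x + z) as z,
  respectively |z|, times averages over s in [0, 1]. The integrand of \<L>_\<phi> f then becomes
  sgn z h(|z|) / |z|^\<alpha> times a quotient Q_f(t, x, z) of two such averages, and Q_f is smooth in all
  variables. Symmetrising the odd kernel gains a factor |z|, so principal values against it converge
  and, by dominated convergence, may be differentiated under the integral sign whenever \<alpha> < 2.

  The momentum equation reads u e = pv(kernel Q_(\<rho> u)) - u_t. Hence e_t + (u e)_x is
  u_xt - u_tx plus the principal value of the kernel against \<partial>_t Q_\<rho> + \<partial>_x Q_(\<rho> u).
  The first term vanishes by symmetry of second derivatives; the second integrand vanishes
  identically, because the mass equation \<rho>_t = -(\<rho> u)_x turns the time derivatives of the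
  averages of \<rho> and \<rho>_x into minus the space derivatives of the averages of (\<rho> u)_x and
  (\<rho> u)_xx. The equation for q = e / \<rho> follows from the quotient rule and the mass equation.
\<close>

section \<open>Smooth functions of two variables\<close>

lemma continuous_on_slice:
  assumes "continuous_on (I \<times> UNIV) (\<lambda>(t, x). f t x)" "t \<in> I"
  shows "continuous_on UNIV (f t)"
  by (rule continuous_on_compose2[OF assms(1), of _ "\<lambda>x. (t, x)", simplified])
     (use assms(2) in \<open>auto intro!: continuous_intros\<close>)

lemma Ck2_on_cong:
  assumes "open S" "\<And>t x. (t, x) \<in> S \<Longrightarrow> f t x = g t x" "Ck2_on k S f"
  shows "Ck2_on k S g"
  using assms(2,3)
proof (induction k arbitrary: f g)
  case 0
  then show ?case
    by (auto intro: continuous_on_cong[THEN iffD1] simp: split_beta)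
next
  case (Suc k)
  from Suc.prems(2) obtain ft fx where
    d: "\<forall>(t, x)\<in>S. ((\<lambda>s. f s x) has_real_derivative ft t x) (at t)
                   \<and> ((\<lambda>y. f t y) has_real_derivative fx t x) (at x)"
    and c: "Ck2_on k S ft" "Ck2_on k S fx" by auto
  have "((\<lambda>s. g s x) has_real_derivative ft t x) (at t)
        \<and> ((\<lambda>y. g t y) has_real_derivative fx t x) (at x)" if tx: "(t, x) \<in> S" for t x
  proof
    have o1: "open {s. (s, x) \<in> S}" and o2: "open {y. (t, y) \<in> S}"
      by (rule open_vimage[OF \<open>open S\<close>, unfolded vimage_def]; auto intro!: continuous_intros)+
    show "((\<lambda>s. g s x) has_real_derivative ft t x) (at t)"
      by (rule has_field_derivative_transform_within_open[OF _ o1, of "\<lambda>s. f s x"])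
         (use d tx Suc.prems(1) in auto)
    show "((\<lambda>y. g t y) has_real_derivative fx t x) (at x)"
      by (rule has_field_derivative_transform_within_open[OF _ o2, of "\<lambda>y. f t y"])
         (use d tx Suc.prems(1) in auto)
  qed
  with c show ?case by auto
qed

lemma Ck2_on_SucD:
  assumes "open S" "Ck2_on (Suc k) S f"
  shows "Ck2_on k S (dt f)" "Ck2_on k S (dx f)"
    and "\<And>t x. (t, x) \<in> S \<Longrightarrow> ((\<lambda>s. f s x) has_real_derivative dt f t x) (at t)"
    and "\<And>t x. (t, x) \<in> S \<Longrightarrow> ((\<lambda>y. f t y) has_real_derivative dx f t x) (at x)"
proof -
  from assms(2) obtain ft fx where
    d: "\<forall>(t, x)\<in>S. ((\<lambda>s. f s x) has_real_derivative ft t x) (at t)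
                   \<and> ((\<lambda>y. f t y) has_real_derivative fx t x) (at x)"
    and c: "Ck2_on k S ft" "Ck2_on k S fx" by auto
  have dt_eq: "dt f t x = ft t x" and dx_eq: "dx f t x = fx t x" if "(t, x) \<in> S" for t x
    using d that unfolding dt_def dx_def by (auto intro: DERIV_imp_deriv)
  show "Ck2_on k S (dt f)" "Ck2_on k S (dx f)"
    by (rule Ck2_on_cong[OF assms(1) _ c(1)] Ck2_on_cong[OF assms(1) _ c(2)]; simp add: dt_eq dx_eq)+
  show "((\<lambda>s. f s x) has_real_derivative dt f t x) (at t)"
    and "((\<lambda>y. f t y) has_real_derivative dx f t x) (at x)" if "(t, x) \<in> S" for t x
    using d that dt_eq dx_eq by auto
qed

lemma smooth2_onD:
  assumes "open S" "smooth2_on S f"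
  shows "smooth2_on S (dt f)" "smooth2_on S (dx f)"
    and "\<And>t x. (t, x) \<in> S \<Longrightarrow> ((\<lambda>s. f s x) has_real_derivative dt f t x) (at t)"
    and "\<And>t x. (t, x) \<in> S \<Longrightarrow> ((\<lambda>y. f t y) has_real_derivative dx f t x) (at x)"
    and "continuous_on S (\<lambda>(t, x). f t x)"
  using Ck2_on_SucD[OF assms(1)] assms(2) unfolding smooth2_on_def
  by (metis Ck2_on.simps(1))+

lemma Ck2_on_SucI:
  assumes "\<And>t x. (t, x) \<in> S \<Longrightarrow> ((\<lambda>s. f s x) has_real_derivative ft t x) (at t)"
    and "\<And>t x. (t, x) \<in> S \<Longrightarrow> ((\<lambda>y. f t y) has_real_derivative fx t x) (at x)"
    and "Ck2_on k S ft" "Ck2_on k S fx"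
  shows "Ck2_on (Suc k) S f"
  using assms unfolding Ck2_on.simps by (intro exI[of _ ft] exI[of _ fx]) auto

lemma Ck2_on_lincomb:
  assumes "Ck2_on k S f" "Ck2_on k S g"
  shows "Ck2_on k S (\<lambda>t x. a * f t x + b * g t x)"
  using assms
proof (induction k arbitrary: f g)
  case 0
  then show ?case by (auto simp: split_beta intro!: continuous_intros)
next
  case (Suc k)
  from Suc.prems(1) obtain ft fx where
    f: "\<forall>(t, x)\<in>S. ((\<lambda>s. f s x) has_real_derivative ft t x) (at t)
                   \<and> ((\<lambda>y. f t y) has_real_derivative fx t x) (at x)"
       "Ck2_on k S ft" "Ck2_on k S fx" by auto
  from Suc.prems(2) obtain gt gx where
    g: "\<forall>(t, x)\<in>S. ((\<lambda>s. g s x) has_real_derivative gt t x) (at t)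
                   \<and> ((\<lambda>y. g t y) has_real_derivative gx t x) (at x)"
       "Ck2_on k S gt" "Ck2_on k S gx" by auto
  show ?case
    by (rule Ck2_on_SucI[where ft="\<lambda>t x. a * ft t x + b * gt t x" and fx="\<lambda>t x. a * fx t x + b * gx t x"])
       (use f g Suc.IH in \<open>auto intro!: derivative_eq_intros\<close>)
qed

lemma smooth2_on_diff:
  "smooth2_on S f \<Longrightarrow> smooth2_on S g \<Longrightarrow> smooth2_on S (\<lambda>t x. f t x - g t x)"
  using Ck2_on_lincomb[of _ S f g 1 "-1"] unfolding smooth2_on_def by simp

lemma smooth2_on_mult:
  assumes "open S" "smooth2_on S f" "smooth2_on S g"
  shows "smooth2_on S (\<lambda>t x. f t x * g t x)"
proof -
  have "Ck2_on k S (\<lambda>t x. f t x * g t x)" if "smooth2_on S f" "smooth2_on S g" for k f g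
    using that
  proof (induction k arbitrary: f g)
    case 0
    then show ?case
      by (auto dest!: smooth2_onD(5)[OF assms(1)] simp: split_beta intro!: continuous_intros)
  next
    case (Suc k)
    note f = smooth2_onD[OF assms(1) Suc.prems(1)] and g = smooth2_onD[OF assms(1) Suc.prems(2)]
    have C1: "Ck2_on k S (\<lambda>t x. dt f t x * g t x + f t x * dt g t x)"
      using Ck2_on_lincomb[OF Suc.IH[OF f(1) Suc.prems(2)] Suc.IH[OF Suc.prems(1) g(1)], of 1 1]
      by simp
    have C2: "Ck2_on k S (\<lambda>t x. dx f t x * g t x + f t x * dx g t x)"
      using Ck2_on_lincomb[OF Suc.IH[OF f(2) Suc.prems(2)] Suc.IH[OF Suc.prems(1) g(2)], of 1 1]
      by simp
    show ?case
      by (rule Ck2_on_SucI[OF _ _ C1 C2]) (use f g in \<open>auto intro!: derivative_eq_intros\<close>)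
  qed
  with assms show ?thesis unfolding smooth2_on_def by blast
qed

lemma smooth2_on_divide:
  assumes "open S" "smooth2_on S f" "smooth2_on S g" "\<And>t x. (t, x) \<in> S \<Longrightarrow> g t x \<noteq> 0"
  shows "smooth2_on S (\<lambda>t x. f t x / g t x)"
proof -
  have "Ck2_on k S (\<lambda>t x. f t x / g t x)"
    if "smooth2_on S f" "smooth2_on S g" "\<And>t x. (t, x) \<in> S \<Longrightarrow> g t x \<noteq> 0" for k f g
    using that
  proof (induction k arbitrary: f g)
    case 0
    then show ?case
      by (auto dest!: smooth2_onD(5)[OF assms(1)] simp: split_beta intro!: continuous_intros)
  next
    case (Suc k)
    note f = smooth2_onD[OF assms(1) Suc.prems(1)] and g = smooth2_onD[OF assms(1) Suc.prems(2)]
    have gg: "smooth2_on S (\<lambda>t x. g t x * g t x)"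
      by (rule smooth2_on_mult[OF assms(1) Suc.prems(2,2)])
    have C1: "Ck2_on k S (\<lambda>t x. (dt f t x * g t x - f t x * dt g t x) / (g t x * g t x))"
      by (rule Suc.IH[OF smooth2_on_diff gg])
         (use smooth2_on_mult[OF assms(1)] f g Suc.prems in auto)
    have C2: "Ck2_on k S (\<lambda>t x. (dx f t x * g t x - f t x * dx g t x) / (g t x * g t x))"
      by (rule Suc.IH[OF smooth2_on_diff gg])
         (use smooth2_on_mult[OF assms(1)] f g Suc.prems in auto)
    show ?case
      by (rule Ck2_on_SucI[OF _ _ C1 C2]) (use f g Suc.prems(3) in \<open>auto intro!: DERIV_divide\<close>)
  qed
  with assms show ?thesis unfolding smooth2_on_def by blast
qed

lemma DERIV_shift_left:
  "(g has_real_derivative D) (at (a + x)) \<Longrightarrow> ((\<lambda>x. g (a + x)) has_real_derivative D) (at x)"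
  using DERIV_shift[of g D x a] by (simp add: add.commute)

lemma smooth2_on_translate_space:
  assumes "open I" "smooth2_on (I \<times> UNIV) f" "t0 \<in> I"
  shows "smooth2_on (UNIV \<times> UNIV) (\<lambda>p w. f t0 (p + w))"
proof -
  have "Ck2_on k (UNIV \<times> UNIV) (\<lambda>p w. f t0 (p + w))" if "smooth2_on (I \<times> UNIV) f" for k f
    using that
  proof (induction k arbitrary: f)
    case 0
    have "continuous_on (UNIV \<times> UNIV) (\<lambda>q. (\<lambda>(t, x). f t x) ((\<lambda>(p, w). (t0, p + w)) q))"
      by (rule continuous_on_compose2[OF smooth2_onD(5)[OF _ \<open>smooth2_on (I \<times> UNIV) f\<close>]])
         (use assms in \<open>auto intro!: continuous_intros open_Times simp: split_beta\<close>)
    then show ?case by (simp add: split_beta)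
  next
    case (Suc k)
    note f = smooth2_onD[OF open_Times[OF assms(1) open_UNIV] Suc.prems]
    show ?case
      by (rule Ck2_on_SucI[OF _ _ Suc.IH[OF f(2)] Suc.IH[OF f(2)]])
         (use f(4) assms(3) in \<open>auto simp: DERIV_shift[symmetric] intro: DERIV_shift_left\<close>)
  qed
  with assms show ?thesis unfolding smooth2_on_def by blast
qed

lemma smooth2_on_translate_time:
  assumes "open I" "smooth2_on (I \<times> UNIV) f"
  shows "smooth2_on (I \<times> UNIV) (\<lambda>p w. f p (x0 + w))"
proof -
  have "Ck2_on k (I \<times> UNIV) (\<lambda>p w. f p (x0 + w))" if "smooth2_on (I \<times> UNIV) f" for k f
    using that
  proof (induction k arbitrary: f)
    case 0
    have "continuous_on (I \<times> UNIV) (\<lambda>q. (\<lambda>(t, x). f t x) ((\<lambda>(p, w). (p, x0 + w)) q))"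
      by (rule continuous_on_compose2[OF smooth2_onD(5)[OF _ \<open>smooth2_on (I \<times> UNIV) f\<close>]])
         (use assms in \<open>auto intro!: continuous_intros open_Times simp: split_beta\<close>)
    then show ?case by (simp add: split_beta)
  next
    case (Suc k)
    note f = smooth2_onD[OF open_Times[OF assms(1) open_UNIV] Suc.prems]
    show ?case
      by (rule Ck2_on_SucI[OF _ _ Suc.IH[OF f(1)] Suc.IH[OF f(2)]])
         (use f(3,4) in \<open>auto intro: DERIV_shift_left\<close>)
  qed
  with assms show ?thesis unfolding smooth2_on_def by blast
qed

lemma has_real_derivative_integral_interval:
  assumes "open I" "{a..b} \<subseteq> I" "smooth2_on (I \<times> UNIV) g"
  shows "((\<lambda>y. integral {a..b} (\<lambda>s. g s y)) has_real_derivative integral {a..b} (\<lambda>s. dx g s x)) (at x)"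
proof -
  have S: "open (I \<times> (UNIV :: real set))"
    using assms(1) by (simp add: open_Times)
  note gD = smooth2_onD[OF S assms(3)]
  have "((\<lambda>y. integral (cbox a b) (\<lambda>s. g s y)) has_field_derivative
          integral (cbox a b) (\<lambda>s. dx g s x)) (at x within UNIV)"
  proof (rule leibniz_rule_field_derivative)
    show "((\<lambda>y. g s y) has_field_derivative dx g s y) (at y within UNIV)" if "s \<in> cbox a b" for y s
      using gD(4)[of s y] that assms(2) by auto
    show "(\<lambda>s. g s y) integrable_on cbox a b" for y
      by (rule integrable_continuous, rule continuous_on_compose2[OF gD(5), of _ "\<lambda>s. (s, y)", simplified])
         (use assms(2) in \<open>auto intro!: continuous_intros\<close>)
    have "continuous_on (UNIV \<times> cbox a b) (\<lambda>q. (\<lambda>(s, y). dx g s y) ((\<lambda>(y, s). (s, y)) q))"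
      by (rule continuous_on_compose2[OF smooth2_onD(5)[OF S gD(2)]])
         (use assms(2) in \<open>auto simp: split_beta intro!: continuous_intros\<close>)
    then show "continuous_on (UNIV \<times> cbox a b) (\<lambda>(y, s). dx g s y)"
      by (simp add: split_beta)
  qed auto
  then show ?thesis
    by simp
qed

lemma dt_dx_commute:
  assumes I: "open I" "t0 \<in> I" and u: "smooth2_on (I \<times> UNIV) u"
  shows "dt (dx u) t0 x0 = dx (dt u) t0 x0"
proof -
  have S: "open (I \<times> (UNIV :: real set))"
    using I(1) by (simp add: open_Times)
  note uD = smooth2_onD[OF S u] and vD = smooth2_onD[OF S smooth2_onD(1)[OF S u]]
  obtain e where e: "e > 0" "ball t0 e \<subseteq> I"
    using I openE by blast
  define t1 where "t1 = t0 - e / 2"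
  define t2 where "t2 = t0 + e / 2"
  have "{t1..t2} \<subseteq> ball t0 e"
    using e(1) by (auto simp: t1_def t2_def dist_real_def)
  then have tt: "t1 < t0" "t0 < t2" "{t1..t2} \<subseteq> I"
    using e by (auto simp: t1_def t2_def)
  then have tI: "s \<in> I" if "t1 \<le> s" "s \<le> t2" for s
    using that by auto
  have slice: "continuous_on {t1..t} (\<lambda>s. f s y)"
    if "continuous_on (I \<times> UNIV) (\<lambda>(s, y). f s y)" "t \<le> t2" for f :: "real \<Rightarrow> real \<Rightarrow> real" and t y
    by (rule continuous_on_compose2[OF that(1), of _ "\<lambda>s. (s, y)", simplified])
       (use tt that(2) in \<open>auto intro!: continuous_intros\<close>)
  have ftc: "u t y = u t1 y + integral {t1..t} (\<lambda>s. dt u s y)" if "t1 \<le> t" "t \<le> t2" for t y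
  proof -
    have "((\<lambda>s. dt u s y) has_integral (u t y - u t1 y)) {t1..t}"
      by (rule fundamental_theorem_of_calculus[OF that(1)])
         (use uD(3) tI that in \<open>auto simp: has_real_derivative_iff_has_vector_derivative[symmetric]
                                      intro: has_field_derivative_at_within\<close>)
    then show ?thesis by (simp add: integral_unique)
  qed
  have dx_u: "dx u t x0 = dx u t1 x0 + integral {t1..t} (\<lambda>s. dx (dt u) s x0)" if "t1 < t" "t < t2" for t
  proof -
    have "((\<lambda>y. integral {t1..t} (\<lambda>s. dt u s y)) has_real_derivative
            integral {t1..t} (\<lambda>s. dx (dt u) s x0)) (at x0)"
      by (rule has_real_derivative_integral_interval[OF I(1) _ smooth2_onD(1)[OF S u]])
         (use tI that in auto)
    then have "((\<lambda>y. u t1 y + integral {t1..t} (\<lambda>s. dt u s y)) has_real_derivative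
                 dx u t1 x0 + integral {t1..t} (\<lambda>s. dx (dt u) s x0)) (at x0)"
      using uD(4)[of t1 x0] tI[of t1] tt by (auto intro!: derivative_eq_intros)
    moreover have "(\<lambda>y. u t1 y + integral {t1..t} (\<lambda>s. dt u s y)) = u t"
      using ftc[of t] that by (intro ext) simp
    ultimately have "(u t has_real_derivative dx u t1 x0 + integral {t1..t} (\<lambda>s. dx (dt u) s x0)) (at x0)"
      by simp
    moreover have "(u t has_real_derivative dx u t x0) (at x0)"
      using uD(4)[of t x0] that tI[of t] tt by simp
    ultimately show ?thesis
      by (rule DERIV_unique[symmetric])
  qed
  have "((\<lambda>t. integral {t1..t} (\<lambda>s. dx (dt u) s x0)) has_real_derivative dx (dt u) t0 x0) (at t0)"
    using integral_has_real_derivative[OF slice[OF smooth2_onD(5)[OF S vD(2)] order_refl], of t0] tt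
    by (simp add: at_within_Icc_at)
  then have "((\<lambda>t. dx u t1 x0 + integral {t1..t} (\<lambda>s. dx (dt u) s x0)) has_real_derivative
               dx (dt u) t0 x0) (at t0)"
    by (auto intro!: derivative_eq_intros)
  then have "((\<lambda>t. dx u t x0) has_real_derivative dx (dt u) t0 x0) (at t0)"
    by (rule has_field_derivative_transform_within_open[of _ _ _ "{t1<..<t2}"]) (use tt dx_u in auto)
  moreover have "((\<lambda>t. dx u t x0) has_real_derivative dt (dx u) t0 x0) (at t0)"
    using smooth2_onD(3)[OF S uD(2)] I(2) by simp
  ultimately show ?thesis
    using DERIV_unique by blast
qed

section \<open>Averages along segments\<close>

definition segment_average :: "(real \<Rightarrow> real) \<Rightarrow> (real \<Rightarrow> real \<Rightarrow> real) \<Rightarrow> real \<Rightarrow> real \<Rightarrow> real"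
  where "segment_average w X p z = integral {0..1} (\<lambda>s. w s * X p (s * z))"

lemma continuous_on_segment_average:
  assumes "continuous_on (U \<times> UNIV) (\<lambda>(p, y). X p y)" "continuous_on UNIV w"
  shows "continuous_on (U \<times> UNIV) (\<lambda>(p, z). segment_average w X p z)"
proof -
  have "continuous_on ((U \<times> UNIV) \<times> cbox 0 1)
          (\<lambda>q. (\<lambda>(p, y). X p y) ((\<lambda>(pz, s::real). (fst pz, s * snd pz)) q))"
    by (rule continuous_on_compose2[OF assms(1)]) (auto intro!: continuous_intros simp: split_beta)
  then have "continuous_on ((U \<times> UNIV) \<times> cbox 0 1) (\<lambda>(pz, s). w s * X (fst pz) (s * snd pz))"
    by (auto intro!: continuous_intros continuous_on_compose2[OF assms(2)] simp: split_beta)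
  then have "continuous_on (U \<times> UNIV) (\<lambda>pz. integral (cbox 0 1) (\<lambda>s. w s * X (fst pz) (s * snd pz)))"
    by (rule integral_continuous_on_param)
  then show ?thesis by (simp add: segment_average_def split_beta)
qed

lemma segment_average_has_derivative_right:
  assumes "continuous_on UNIV (Xy p)" "continuous_on UNIV w"
    and "\<And>y. (X p has_real_derivative Xy p y) (at y)"
  shows "((\<lambda>z. segment_average w X p z) has_real_derivative
           segment_average (\<lambda>s. w s * s) Xy p z) (at z)"
proof -
  have cX: "continuous_on UNIV (X p)"
    using assms(3) by (meson DERIV_isCont continuous_at_imp_continuous_on)
  have "((\<lambda>z. integral (cbox 0 1) (\<lambda>s. w s * X p (s * z))) has_field_derivative
         integral (cbox 0 1) (\<lambda>s. w s * (Xy p (s * z) * s))) (at z within UNIV)"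
  proof (rule leibniz_rule_field_derivative)
    show "((\<lambda>z. w s * X p (s * z)) has_field_derivative w s * (Xy p (s * z) * s)) (at z within UNIV)"
      for z s
      by (rule DERIV_cmult, rule DERIV_chain2[OF assms(3)]) (auto intro!: derivative_eq_intros)
    show "(\<lambda>s. w s * X p (s * z)) integrable_on cbox 0 1" for z
      by (rule integrable_continuous)
         (auto intro!: continuous_intros continuous_on_compose2[OF cX] continuous_on_subset[OF assms(2)])
    show "continuous_on (UNIV \<times> cbox 0 1) (\<lambda>(z, s). w s * (Xy p (s * z) * s))"
      by (auto simp: split_beta intro!: continuous_intros continuous_on_compose2[OF assms(1)]
                                        continuous_on_compose2[OF assms(2)])
  qed auto
  then show ?thesis by (simp add: segment_average_def mult_ac)
qed

lemma segment_average_has_derivative_left: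
  assumes "open U" "convex U" "p \<in> U"
    and "continuous_on (U \<times> UNIV) (\<lambda>(p, y). X p y)" "continuous_on (U \<times> UNIV) (\<lambda>(p, y). Xp p y)"
    and "continuous_on UNIV w"
    and "\<And>q y. q \<in> U \<Longrightarrow> ((\<lambda>r. X r y) has_real_derivative Xp q y) (at q)"
  shows "((\<lambda>q. segment_average w X q z) has_real_derivative segment_average w Xp p z) (at p)"
proof -
  have "((\<lambda>q. integral (cbox 0 1) (\<lambda>s. w s * X q (s * z))) has_field_derivative
         integral (cbox 0 1) (\<lambda>s. w s * Xp p (s * z))) (at p within U)"
  proof (rule leibniz_rule_field_derivative)
    show "((\<lambda>q. w s * X q (s * z)) has_field_derivative w s * Xp q (s * z)) (at q within U)"
      if "q \<in> U" for q s
      by (rule DERIV_cmult, rule has_field_derivative_at_within, rule assms(7)[OF that])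
    show "(\<lambda>s. w s * X q (s * z)) integrable_on cbox 0 1" if "q \<in> U" for q
    proof -
      have "continuous_on UNIV (X q)"
        by (rule continuous_on_slice[OF assms(4) that])
      then show ?thesis
        by (intro integrable_continuous)
           (auto intro!: continuous_intros continuous_on_compose2[of UNIV "X q"]
                         continuous_on_subset[OF assms(6)])
    qed
    have "continuous_on (U \<times> cbox 0 1) (\<lambda>q. (\<lambda>(p, y). Xp p y) ((\<lambda>(q, s::real). (q, s * z)) q))"
      by (rule continuous_on_compose2[OF assms(5)]) (auto intro!: continuous_intros simp: split_beta)
    then show "continuous_on (U \<times> cbox 0 1) (\<lambda>(q, s). w s * Xp q (s * z))"
      by (auto intro!: continuous_intros continuous_on_compose2[OF assms(6)] simp: split_beta)
  qed (use assms in auto)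
  then show ?thesis
    using at_within_open[OF assms(3,1)] by (simp add: segment_average_def)
qed

lemma segment_average_pos:
  assumes "continuous_on UNIV (X p)" "\<And>y. X p y > 0"
  shows "segment_average (\<lambda>s. 1) X p z > 0"
proof -
  have c: "continuous_on {0..1} (\<lambda>s. X p (s * z))"
    by (auto intro!: continuous_intros continuous_on_compose2[OF assms(1)])
  obtain s0 where s0: "\<And>s. s \<in> {0..1} \<Longrightarrow> X p (s0 * z) \<le> X p (s * z)"
    using continuous_attains_inf[OF compact_Icc _ c] by fastforce
  have "X p (s0 * z) = integral {0..1} (\<lambda>s::real. X p (s0 * z))"
    by simp
  also have "\<dots> \<le> integral {0..1} (\<lambda>s. X p (s * z))"
    by (rule integral_le) (use s0 c in \<open>auto intro: integrable_continuous_interval\<close>)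
  finally show ?thesis
    using assms(2)[of "s0 * z"] by (simp add: segment_average_def)
qed

lemma segment_integral_pos:
  fixes g :: "real \<Rightarrow> real"
  assumes "continuous_on UNIV g" "\<And>y. g y > 0"
  shows "integral {0..1} (\<lambda>s. g (x + s * z)) > 0"
proof -
  have "continuous_on UNIV (\<lambda>y. g (x + y))"
    by (auto intro!: continuous_intros continuous_on_compose2[OF assms(1)])
  then show ?thesis
    using segment_average_pos[of "\<lambda>_ y. g (x + y)"] assms(2) by (simp add: segment_average_def)
qed

lemma smooth2_on_segment_average:
  assumes "open I" "convex I" "smooth2_on (I \<times> UNIV) X" "continuous_on UNIV w"
  shows "smooth2_on (I \<times> UNIV) (segment_average w X)"
proof -
  have S: "open (I \<times> (UNIV :: real set))"
    using assms(1) by (simp add: open_Times)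
  have "Ck2_on k (I \<times> UNIV) (segment_average w X)"
    if "smooth2_on (I \<times> UNIV) X" "continuous_on UNIV w" for k w X
    using that
  proof (induction k arbitrary: w X)
    case 0
    then show ?case
      using continuous_on_segment_average smooth2_onD(5)[OF S] by simp
  next
    case (Suc k)
    note X = smooth2_onD[OF S Suc.prems(1)]
    have cw: "continuous_on UNIV (\<lambda>s. w s * s)"
      using Suc.prems(2) by (intro continuous_intros)
    have cXy: "continuous_on UNIV (dx X p)" if "p \<in> I" for p
      by (rule continuous_on_slice[OF smooth2_onD(5)[OF S X(2)] that])
    show ?case
    proof (rule Ck2_on_SucI[OF _ _ Suc.IH[OF X(1) Suc.prems(2)] Suc.IH[OF X(2) cw]])
      show "((\<lambda>q. segment_average w X q z) has_real_derivative segment_average w (dt X) p z) (at p)"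
        if "(p, z) \<in> I \<times> UNIV" for p z
        using that assms(1,2) X(3,5) smooth2_onD(5)[OF S X(1)] Suc.prems(2)
        by (intro segment_average_has_derivative_left) auto
      show "((\<lambda>z. segment_average w X p z) has_real_derivative
              segment_average (\<lambda>s. w s * s) (dx X) p z) (at z)"
        if "(p, z) \<in> I \<times> UNIV" for p z
        using that X(4) Suc.prems(2) cXy by (intro segment_average_has_derivative_right) auto
    qed
  qed
  with assms show ?thesis unfolding smooth2_on_def by blast
qed

lemma diff_eq_mult_segment_integral:
  assumes "\<And>y. (f has_real_derivative f' y) (at y)"
  shows "f (x + z) - f x = z * integral {0..1} (\<lambda>s. f' (x + s * z))"
proof -
  have "((\<lambda>s. x + s * z) has_real_derivative z) (at s)" for s
    by (auto intro!: derivative_eq_intros)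
  then have "((\<lambda>s. f (x + s * z)) has_real_derivative f' (x + s * z) * z) (at s)" for s
    by (rule DERIV_chain2[OF assms])
  then have "((\<lambda>s. f' (x + s * z) * z) has_integral (f (x + 1 * z) - f (x + 0 * z))) {0..1}"
    by (intro fundamental_theorem_of_calculus)
       (auto simp: has_real_derivative_iff_has_vector_derivative[symmetric]
             intro: has_field_derivative_at_within)
  then have int: "((\<lambda>s. f' (x + s * z) * z) has_integral (f (x + z) - f x)) {0..1}"
    by simp
  show ?thesis
  proof (cases "z = 0")
    case False
    then have "(\<lambda>s. f' (x + s * z)) integrable_on {0..1}"
      using has_integral_integrable[OF int] by simp
    then show ?thesis
      using integral_unique[OF int] by (simp add: mult.commute)
  qed simp
qed

lemma integral_eq_segment_integral:
  fixes g :: "real \<Rightarrow> real"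
  assumes "z \<noteq> 0" "continuous_on UNIV g"
  shows "integral {min x (x + z)..max x (x + z)} g = \<bar>z\<bar> * integral {0..1} (\<lambda>s. g (x + s * z))"
proof -
  let ?J = "{min x (x + z)..max x (x + z)}"
  have "(g has_integral integral ?J g) (cbox (min x (x + z)) (max x (x + z)))"
    by (auto intro!: integrable_integral integrable_continuous_interval continuous_on_subset[OF assms(2)])
  from has_integral_affinity[OF this assms(1), of x]
  have "((\<lambda>s. g (z * s + x)) has_integral (1 / \<bar>z\<bar>) * integral ?J g)
          ((\<lambda>y. (1 / z) * y + - ((1 / z) * x)) ` ?J)"
    by simp
  moreover have "(\<lambda>y. (1 / z) * y + - ((1 / z) * x)) ` ?J = {0..1}"
    unfolding image_affinity_atLeastAtMost using assms(1)
    by (cases "z > 0") (auto simp: field_simps min_def max_def)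
  ultimately have "integral {0..1} (\<lambda>s. g (x + s * z)) = (1 / \<bar>z\<bar>) * integral ?J g"
    by (simp add: integral_unique algebra_simps)
  then show ?thesis
    using assms(1) by simp
qed

section \<open>Factorisation of the kernel\<close>

text \<open>
  The quotient (f(x + z) - f(x)) / (integral of \<rho> over [x, x + z]), written so that it is smooth
  across z = 0. With it the integrand of L_op factors as an odd singular kernel times a smooth
  function.
\<close>

definition density_quotient ::
    "(real \<Rightarrow> real \<Rightarrow> real) \<Rightarrow> (real \<Rightarrow> real \<Rightarrow> real) \<Rightarrow> real \<Rightarrow> real \<Rightarrow> real \<Rightarrow> real"
  where "density_quotient \<rho> f t x z =
           integral {0..1} (\<lambda>s. dx f t (x + s * z)) / integral {0..1} (\<lambda>s. \<rho> t (x + s * z))"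

definition odd_kernel :: "(real \<Rightarrow> real) \<Rightarrow> real \<Rightarrow> real \<Rightarrow> real"
  where "odd_kernel h \<alpha> z = sgn z * h \<bar>z\<bar> / \<bar>z\<bar> powr \<alpha>"

lemma phi_top_mult_diff_eq:
  assumes "continuous_on UNIV (\<rho> t)" "\<And>y. \<rho> t y > 0"
    and "\<And>y. (f t has_real_derivative dx f t y) (at y)"
  shows "phi_top h \<alpha> \<rho> t x (x + z) * (f t (x + z) - f t x) = odd_kernel h \<alpha> z * density_quotient \<rho> f t x z"
proof (cases "z = 0")
  case False
  let ?A = "integral {0..1} (\<lambda>s. dx f t (x + s * z))"
  let ?B = "integral {0..1} (\<lambda>s. \<rho> t (x + s * z))"
  have B: "?B > 0"
    by (rule segment_integral_pos[OF assms(1,2)])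
  have "d_rho \<rho> t x (x + z) = \<bar>z\<bar> * ?B"
    unfolding d_rho_def integral_eq_segment_integral[OF False assms(1)] using B by (simp add: abs_mult)
  then have "phi_top h \<alpha> \<rho> t x (x + z) = h \<bar>z\<bar> / (\<bar>z\<bar> powr \<alpha> * (\<bar>z\<bar> * ?B))"
    by (simp add: phi_top_def)
  moreover have "f t (x + z) - f t x = sgn z * \<bar>z\<bar> * ?A"
    using diff_eq_mult_segment_integral[OF assms(3)] by (simp add: sgn_mult_abs)
  ultimately show ?thesis
    using B False unfolding odd_kernel_def density_quotient_def by (simp add: field_simps)
qed (simp add: odd_kernel_def)

lemma smooth2_on_density_quotient_space:
  assumes "open I" "smooth2_on (I \<times> UNIV) \<rho>" "smooth2_on (I \<times> UNIV) f" "t \<in> I"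
    and "\<And>x. \<rho> t x > 0"
  shows "smooth2_on (UNIV \<times> UNIV) (density_quotient \<rho> f t)"
proof -
  have S: "open (I \<times> (UNIV :: real set))"
    using assms(1) by (simp add: open_Times)
  have "smooth2_on (UNIV \<times> UNIV) (\<lambda>p z.
          segment_average (\<lambda>_. 1) (\<lambda>p y. dx f t (p + y)) p z
        / segment_average (\<lambda>_. 1) (\<lambda>p y. \<rho> t (p + y)) p z)"
  proof (intro smooth2_on_divide smooth2_on_segment_average smooth2_on_translate_space[OF assms(1)])
    show "smooth2_on (I \<times> UNIV) (dx f)"
      by (rule smooth2_onD(2)[OF S assms(3)])
    have "continuous_on UNIV (\<rho> t)"
      by (rule continuous_on_slice[OF smooth2_onD(5)[OF S assms(2)] assms(4)])
    then show "segment_average (\<lambda>_. 1) (\<lambda>p y. \<rho> t (p + y)) p z \<noteq> 0" for p z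
      using segment_integral_pos[of "\<rho> t" p z] assms(5) by (simp add: segment_average_def)
  qed (use assms in auto)
  then show ?thesis
    by (simp add: segment_average_def density_quotient_def[abs_def])
qed

lemma smooth2_on_density_quotient_time:
  assumes "open I" "convex I" "smooth2_on (I \<times> UNIV) \<rho>" "smooth2_on (I \<times> UNIV) f"
    and "\<And>t x. t \<in> I \<Longrightarrow> \<rho> t x > 0"
  shows "smooth2_on (I \<times> UNIV) (\<lambda>t. density_quotient \<rho> f t x)"
proof -
  have S: "open (I \<times> (UNIV :: real set))"
    using assms(1) by (simp add: open_Times)
  have "smooth2_on (I \<times> UNIV) (\<lambda>p z.
          segment_average (\<lambda>_. 1) (\<lambda>p y. dx f p (x + y)) p z
        / segment_average (\<lambda>_. 1) (\<lambda>p y. \<rho> p (x + y)) p z)"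
  proof (intro smooth2_on_divide smooth2_on_segment_average smooth2_on_translate_time[OF assms(1)])
    show "smooth2_on (I \<times> UNIV) (dx f)"
      by (rule smooth2_onD(2)[OF S assms(4)])
    show "segment_average (\<lambda>_. 1) (\<lambda>p y. \<rho> p (x + y)) p z \<noteq> 0" if "(p, z) \<in> I \<times> UNIV" for p z
    proof -
      have "continuous_on UNIV (\<rho> p)"
        using that by (intro continuous_on_slice[OF smooth2_onD(5)[OF S assms(3)]]) auto
      then show ?thesis
        using segment_integral_pos[of "\<rho> p" x z] assms(5) that by (simp add: segment_average_def)
    qed
  qed (use assms S in auto)
  then show ?thesis
    by (simp add: segment_average_def density_quotient_def[abs_def])
qed

lemma has_real_derivative_segment_integral_space:
  assumes "open I" "smooth2_on (I \<times> UNIV) g" "t \<in> I"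
  shows "((\<lambda>x. integral {0..1} (\<lambda>s. g t (x + s * z))) has_real_derivative
           integral {0..1} (\<lambda>s. dx g t (x + s * z))) (at x)"
proof -
  have S: "open (I \<times> (UNIV :: real set))"
    using assms(1) by (simp add: open_Times)
  have "((\<lambda>x. segment_average (\<lambda>_. 1) (\<lambda>p y. g t (p + y)) x z) has_real_derivative
           segment_average (\<lambda>_. 1) (\<lambda>p y. dx g t (p + y)) x z) (at x)"
  proof (rule segment_average_has_derivative_left[where U=UNIV])
    show "continuous_on (UNIV \<times> UNIV) (\<lambda>(p, y). g t (p + y))"
      and "continuous_on (UNIV \<times> UNIV) (\<lambda>(p, y). dx g t (p + y))"
      using smooth2_onD(5)[OF open_Times[OF open_UNIV open_UNIV]
              smooth2_on_translate_space[OF assms(1) _ assms(3)]] smooth2_onD(2)[OF S assms(2)] assms(2)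
      by blast+
    show "((\<lambda>r. g t (r + y)) has_real_derivative dx g t (q + y)) (at q)" for q y
      using smooth2_onD(4)[OF S assms(2), of t "q + y"] assms(3) by (simp add: DERIV_shift)
  qed auto
  then show ?thesis
    by (simp add: segment_average_def)
qed

lemma has_real_derivative_segment_integral_time:
  assumes "open I" "convex I" "smooth2_on (I \<times> UNIV) g" "t \<in> I"
  shows "((\<lambda>t. integral {0..1} (\<lambda>s. g t (x + s * z))) has_real_derivative
           integral {0..1} (\<lambda>s. dt g t (x + s * z))) (at t)"
proof -
  have S: "open (I \<times> (UNIV :: real set))"
    using assms(1) by (simp add: open_Times)
  have "((\<lambda>t. segment_average (\<lambda>_. 1) (\<lambda>p y. g p (x + y)) t z) has_real_derivative
           segment_average (\<lambda>_. 1) (\<lambda>p y. dt g p (x + y)) t z) (at t)"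
  proof (rule segment_average_has_derivative_left[OF assms(1,2,4)])
    show "continuous_on (I \<times> UNIV) (\<lambda>(p, y). g p (x + y))"
      and "continuous_on (I \<times> UNIV) (\<lambda>(p, y). dt g p (x + y))"
      using smooth2_onD(5)[OF S smooth2_on_translate_time[OF assms(1)]] smooth2_onD(1)[OF S assms(3)] assms(3)
      by blast+
    show "((\<lambda>r. g r (x + y)) has_real_derivative dt g q (x + y)) (at q)" if "q \<in> I" for q y
      using smooth2_onD(3)[OF S assms(3)] that by simp
  qed auto
  then show ?thesis
    by (simp add: segment_average_def)
qed

section \<open>Truncated and principal value integrals\<close>

lemma trunc_int_eq_integral:
  fixes g :: "real \<Rightarrow> real"
  assumes "continuous_on ({-pi..pi} - {0}) g" "0 < \<epsilon>" "\<epsilon> \<le> pi"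
  shows "trunc_int \<epsilon> g = integral {\<epsilon>..pi} (\<lambda>z. g z + g (-z))"
proof -
  have "{z. \<epsilon> \<le> \<bar>z\<bar> \<and> \<bar>z\<bar> \<le> pi} = {-pi..-\<epsilon>} \<union> {\<epsilon>..pi}"
    using assms(2) by (auto simp: abs_if)
  moreover have "g integrable_on {-pi..-\<epsilon>}" "g integrable_on {\<epsilon>..pi}"
    by (rule integrable_continuous_interval, rule continuous_on_subset[OF assms(1)], use assms in auto)+
  moreover have "(\<lambda>z. g (-z)) integrable_on {\<epsilon>..pi}"
    by (rule integrable_continuous_interval, rule continuous_on_compose2[OF assms(1)])
       (use assms in \<open>auto intro!: continuous_intros\<close>)
  ultimately show ?thesis
    using assms(2) Henstock_Kurzweil_Integration.integral_reflect_real[of "-\<epsilon>" "-pi" g]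
    by (simp add: trunc_int_def integral_Un integral_add)
qed

lemma trunc_int_diff:
  fixes f g :: "real \<Rightarrow> real"
  assumes "continuous_on ({-pi..pi} - {0}) f" "continuous_on ({-pi..pi} - {0}) g" "0 < \<epsilon>" "\<epsilon> \<le> pi"
  shows "trunc_int \<epsilon> (\<lambda>z. f z - c * g z) = trunc_int \<epsilon> f - c * trunc_int \<epsilon> g"
proof -
  have int: "(\<lambda>z. k z + k (-z)) integrable_on {\<epsilon>..pi}" if "continuous_on ({-pi..pi} - {0}) k" for k :: "real \<Rightarrow> real"
  proof (intro integrable_continuous_interval continuous_intros)
    show "continuous_on {\<epsilon>..pi} k"
      by (rule continuous_on_subset[OF that]) (use assms in auto)
    show "continuous_on {\<epsilon>..pi} (\<lambda>z. k (- z))"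
      by (rule continuous_on_compose2[OF that]) (use assms in \<open>auto intro!: continuous_intros\<close>)
  qed
  have "continuous_on ({-pi..pi} - {0}) (\<lambda>z. f z - c * g z)"
    by (intro continuous_intros assms)
  then have "trunc_int \<epsilon> (\<lambda>z. f z - c * g z)
      = integral {\<epsilon>..pi} (\<lambda>z. (f z + f (-z)) - c * (g z + g (-z)))"
    using assms(3,4) by (simp add: trunc_int_eq_integral algebra_simps)
  also have "\<dots> = trunc_int \<epsilon> f - c * trunc_int \<epsilon> g"
    using int[OF assms(1)] int[OF assms(2)] assms
    by (subst integral_diff) (auto simp: trunc_int_eq_integral intro: integrable_on_mult_right)
  finally show ?thesis .
qed

lemma pv_torus_eqI:
  "((\<lambda>\<epsilon>. trunc_int \<epsilon> F) \<longlongrightarrow> L) (at_right 0) \<Longrightarrow> pv_torus F = L"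
  unfolding pv_torus_def by (rule tendsto_Lim) simp

lemma pv_torus_minus:
  assumes "((\<lambda>\<epsilon>. trunc_int \<epsilon> F) \<longlongrightarrow> L) (at_right 0)"
  shows "pv_torus (\<lambda>z. - F z) = - pv_torus F"
proof -
  have "((\<lambda>\<epsilon>. trunc_int \<epsilon> (\<lambda>z. - F z)) \<longlongrightarrow> - L) (at_right 0)"
    using tendsto_minus[OF assms] by (simp add: trunc_int_def)
  with assms show ?thesis
    by (simp add: pv_torus_eqI)
qed

lemma integrable_on_powr_bound:
  fixes g :: "real \<Rightarrow> real"
  assumes "\<beta> < 1" "0 \<le> a" "continuous_on {0<..a} g"
    and "\<And>z. 0 < z \<Longrightarrow> z \<le> a \<Longrightarrow> \<bar>g z\<bar> \<le> C * z powr (-\<beta>)"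
  shows "g integrable_on {0..a}"
proof -
  have "(\<lambda>z. C * z powr (-\<beta>)) integrable_on {0..a}"
    using has_integral_mult_right[OF has_integral_powr_from_0[of "-\<beta>" a], of C] assms(1,2)
    by (auto intro: has_integral_integrable)
  then have "(\<lambda>z. C * z powr (-\<beta>)) integrable_on {0<..a}"
    by (rule integrable_spike_set) (auto intro: negligible_subset[of "{0}"])
  then have "g integrable_on {0<..a}"
    by (rule measurable_bounded_by_integrable_imp_integrable[rotated])
       (use assms in \<open>auto intro!: continuous_imp_measurable_on_sets_lebesgue\<close>)
  then show ?thesis
    by (rule integrable_spike_set) (auto intro: negligible_subset[of "{0}"])
qed

lemma continuous_on_symmetric_part:
  fixes g :: "real \<Rightarrow> real"
  assumes "continuous_on ({-pi..pi} - {0}) g"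
  shows "continuous_on {0<..pi} (\<lambda>z. g z + g (-z))"
proof (rule continuous_on_add)
  show "continuous_on {0<..pi} g"
    by (rule continuous_on_subset[OF assms]) auto
  show "continuous_on {0<..pi} (\<lambda>z. g (-z))"
    by (rule continuous_on_compose2[OF assms]) (auto intro!: continuous_intros)
qed

lemma tendsto_trunc_int:
  fixes g :: "real \<Rightarrow> real"
  assumes "\<beta> < 1" "continuous_on ({-pi..pi} - {0}) g"
    and "\<And>z. 0 < z \<Longrightarrow> z \<le> pi \<Longrightarrow> \<bar>g z + g (-z)\<bar> \<le> C * z powr (-\<beta>)"
  shows "((\<lambda>\<epsilon>. trunc_int \<epsilon> g) \<longlongrightarrow> integral {0..pi} (\<lambda>z. g z + g (-z))) (at_right 0)"
proof -
  have "(\<lambda>z. g z + g (-z)) integrable_on {0..pi}"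
    using assms(1,3) by (intro integrable_on_powr_bound continuous_on_symmetric_part assms(2)) auto
  then have "((\<lambda>\<epsilon>. integral {\<epsilon>..pi} (\<lambda>z. g z + g (-z))) \<longlongrightarrow> integral {0..pi} (\<lambda>z. g z + g (-z)))
               (at 0 within {0..pi})"
    using indefinite_integral_continuous_1' pi_gt_zero
    by (fastforce simp: continuous_on_def)
  then have "((\<lambda>\<epsilon>. integral {\<epsilon>..pi} (\<lambda>z. g z + g (-z))) \<longlongrightarrow> integral {0..pi} (\<lambda>z. g z + g (-z)))
               (at_right 0)"
    using at_within_Icc_at_right[OF pi_gt_zero] by simp
  moreover have "\<forall>\<^sub>F \<epsilon> in at_right 0. integral {\<epsilon>..pi} (\<lambda>z. g z + g (-z)) = trunc_int \<epsilon> g"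
    by (rule eventually_at_rightI[of 0 pi]) (use trunc_int_eq_integral[OF assms(2)] in auto)
  ultimately show ?thesis
    by (rule Lim_transform_eventually)
qed

lemma has_real_derivative_integral_dominated:
  fixes S S' :: "real \<Rightarrow> real \<Rightarrow> real"
  assumes "open I" "convex I" "p0 \<in> I"
    and int: "\<And>p. p \<in> I \<Longrightarrow> S p integrable_on K"
    and der: "\<And>p z. p \<in> I \<Longrightarrow> z \<in> K \<Longrightarrow> ((\<lambda>q. S q z) has_real_derivative S' p z) (at p)"
    and dom: "g integrable_on K" "\<And>p z. p \<in> I \<Longrightarrow> z \<in> K \<Longrightarrow> \<bar>S' p z\<bar> \<le> g z"
  shows "((\<lambda>p. integral K (S p)) has_real_derivative integral K (S' p0)) (at p0)"
proof -
  have lipschitz: "\<bar>S p z - S p0 z\<bar> \<le> g z * \<bar>p - p0\<bar>" if "p \<in> I" "z \<in> K" for p z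
    using field_differentiable_bound[OF assms(2), of "\<lambda>q. S q z" "\<lambda>q. S' q z" "g z" p p0] that assms(3)
    by (auto intro: has_field_derivative_at_within der dom)
  have "((\<lambda>p. (integral K (S p) - integral K (S p0)) / (p - p0)) \<longlongrightarrow> integral K (S' p0))
          (at p0 within I)"
    unfolding tendsto_at_iff_sequentially
  proof (intro allI impI)
    fix X :: "nat \<Rightarrow> real"
    assume X: "\<forall>k. X k \<in> I - {p0}" "X \<longlonglongrightarrow> p0"
    define Q where "Q k z = (S (X k) z - S p0 z) / (X k - p0)" for k z
    have "(\<lambda>k. integral K (Q k)) \<longlonglongrightarrow> integral K (S' p0)"
    proof (rule dominated_convergence(2)[OF _ dom(1)])
      show "Q k integrable_on K" for k
        unfolding Q_def divide_inverse
        by (intro integrable_on_mult_left integrable_diff int assms(3)) (use X in auto)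
      show "norm (Q k z) \<le> g z" if "z \<in> K" for k z
        using lipschitz[of "X k" z] X that by (auto simp: Q_def abs_divide divide_le_eq)
      show "(\<lambda>k. Q k z) \<longlonglongrightarrow> S' p0 z" if "z \<in> K" for z
      proof -
        have "((\<lambda>q. (S q z - S p0 z) / (q - p0)) \<longlongrightarrow> S' p0 z) (at p0 within I)"
          using der[OF assms(3) that] unfolding has_field_derivative_iff
          by (rule tendsto_within_subset) simp
        then show ?thesis
          unfolding tendsto_at_iff_sequentially using X by (auto simp: Q_def o_def)
      qed
    qed
    moreover have "integral K (Q k) = (integral K (S (X k)) - integral K (S p0)) / (X k - p0)" for k
    proof -
      have "integral K (Q k) = integral K (\<lambda>z. S (X k) z - S p0 z) / (X k - p0)"
        unfolding Q_def divide_inverse by (rule integral_mult_left)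
      then show ?thesis
        using int[of "X k"] int[OF assms(3)] X(1) by (simp add: integral_diff)
    qed
    ultimately show "((\<lambda>p. (integral K (S p) - integral K (S p0)) / (p - p0)) \<circ> X)
                       \<longlonglongrightarrow> integral K (S' p0)"
      by (simp add: o_def)
  qed
  then show ?thesis
    using at_within_open[OF assms(3,1)] by (simp add: has_field_derivative_iff)
qed

section \<open>Principal values against the odd kernel\<close>

lemma odd_kernel_0 [simp]: "odd_kernel h \<alpha> 0 = 0"
  by (simp add: odd_kernel_def)

lemma continuous_on_odd_kernel:
  assumes "continuous_on UNIV h" "0 \<notin> S"
  shows "continuous_on S (odd_kernel h \<alpha>)"
  unfolding odd_kernel_def using assms(2)
  by (intro continuous_intros continuous_on_compose2[OF assms(1)]) auto

text \<open>Oddness of the kernel cancels one power of z; this is where \<alpha> < 2 enters.\<close>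

lemma odd_kernel_symmetric_bound:
  assumes "\<And>r. \<bar>h r\<bar> \<le> 1" "0 < z" "z \<le> pi"
    and "\<And>y. (g has_real_derivative g' y) (at y)" "\<And>y. y \<in> {-pi..pi} \<Longrightarrow> \<bar>g' y\<bar> \<le> M"
  shows "\<bar>odd_kernel h \<alpha> z * g z + odd_kernel h \<alpha> (-z) * g (-z)\<bar> \<le> 2 * M * z powr (-(\<alpha> - 1))"
proof -
  have "\<bar>g z - g (-z)\<bar> \<le> M * \<bar>z - (-z)\<bar>"
    using field_differentiable_bound[where S="{-pi..pi}" and f=g and f'=g' and B=M and x=z and y="-z"] assms
    by (auto intro: has_field_derivative_at_within)
  then have diff: "\<bar>g z - g (-z)\<bar> \<le> 2 * z * M"
    using assms(2) by (simp add: mult_ac)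
  have "\<bar>odd_kernel h \<alpha> z * g z + odd_kernel h \<alpha> (-z) * g (-z)\<bar>
      = \<bar>h z\<bar> * \<bar>g z - g (-z)\<bar> / z powr \<alpha>"
  proof -
    have "odd_kernel h \<alpha> z * g z + odd_kernel h \<alpha> (-z) * g (-z) = h z * (g z - g (-z)) / z powr \<alpha>"
      using assms(2) by (simp add: odd_kernel_def algebra_simps diff_divide_distrib)
    then show ?thesis
      using assms(2) by (simp add: abs_mult)
  qed
  also have "\<dots> \<le> 1 * (2 * z * M) / z powr \<alpha>"
    using assms(1,2) diff by (intro divide_right_mono mult_mono) auto
  also have "\<dots> = 2 * M * z powr (-(\<alpha> - 1))"
    using assms(2) by (simp add: powr_diff powr_minus field_simps)
  finally show ?thesis .
qed

lemma odd_kernel_symmetric_bounded: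
  assumes "\<And>r. \<bar>h r\<bar> \<le> 1" "\<And>y. (g has_real_derivative g' y) (at y)" "continuous_on UNIV g'"
  shows "\<exists>C. \<forall>z\<in>{0<..pi}.
    \<bar>odd_kernel h \<alpha> z * g z + odd_kernel h \<alpha> (-z) * g (-z)\<bar> \<le> C * z powr (-(\<alpha> - 1))"
proof -
  have "bounded (g' ` {-pi..pi})"
    by (intro compact_imp_bounded compact_continuous_image continuous_on_subset[OF assms(3)]) auto
  then obtain M where "\<And>y. y \<in> {-pi..pi} \<Longrightarrow> \<bar>g' y\<bar> \<le> M"
    unfolding bounded_real by blast
  then show ?thesis
    using odd_kernel_symmetric_bound[where h=h and g=g and g'=g' and M=M and \<alpha>=\<alpha>] assms(1,2)
    by (intro exI[of _ "2 * M"]) auto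
qed

lemma continuous_on_odd_kernel_mult:
  assumes "continuous_on UNIV h" "continuous_on UNIV g"
  shows "continuous_on ({-pi..pi} - {0}) (\<lambda>z. odd_kernel h \<alpha> z * g z)"
  by (rule continuous_on_mult[OF continuous_on_odd_kernel[OF assms(1)] continuous_on_subset[OF assms(2)]])
     auto

lemma tendsto_trunc_int_odd_kernel:
  assumes "continuous_on UNIV h" "\<And>r. \<bar>h r\<bar> \<le> 1" "\<alpha> < 2"
    and "\<And>y. (g has_real_derivative g' y) (at y)" "continuous_on UNIV g'"
  shows "((\<lambda>\<epsilon>. trunc_int \<epsilon> (\<lambda>z. odd_kernel h \<alpha> z * g z)) \<longlongrightarrow>
           integral {0..pi} (\<lambda>z. odd_kernel h \<alpha> z * g z + odd_kernel h \<alpha> (-z) * g (-z))) (at_right 0)"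
proof -
  obtain C where C: "\<forall>z\<in>{0<..pi}.
      \<bar>odd_kernel h \<alpha> z * g z + odd_kernel h \<alpha> (-z) * g (-z)\<bar> \<le> C * z powr (-(\<alpha> - 1))"
    using odd_kernel_symmetric_bounded[OF _ assms(4,5)] assms(2) by blast
  have "continuous_on UNIV g"
    using assms(4) by (meson DERIV_isCont continuous_at_imp_continuous_on)
  then show ?thesis
    using assms(3) C
    by (intro tendsto_trunc_int[where \<beta>="\<alpha> - 1" and C=C] continuous_on_odd_kernel_mult[OF assms(1)]) auto
qed

lemma integrable_on_odd_kernel_symmetric:
  assumes "continuous_on UNIV h" "\<And>r. \<bar>h r\<bar> \<le> 1" "\<alpha> < 2"
    and "\<And>y. (g has_real_derivative g' y) (at y)" "continuous_on UNIV g'"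
  shows "(\<lambda>z. odd_kernel h \<alpha> z * g z + odd_kernel h \<alpha> (-z) * g (-z)) integrable_on {0..pi}"
proof -
  obtain C where C: "\<forall>z\<in>{0<..pi}.
      \<bar>odd_kernel h \<alpha> z * g z + odd_kernel h \<alpha> (-z) * g (-z)\<bar> \<le> C * z powr (-(\<alpha> - 1))"
    using odd_kernel_symmetric_bounded[OF _ assms(4,5)] assms(2) by blast
  have "continuous_on UNIV g"
    using assms(4) by (meson DERIV_isCont continuous_at_imp_continuous_on)
  then have "continuous_on {0<..pi} (\<lambda>z. odd_kernel h \<alpha> z * g z + odd_kernel h \<alpha> (-z) * g (-z))"
    by (rule continuous_on_symmetric_part[OF continuous_on_odd_kernel_mult[OF assms(1)]])
  then show ?thesis
    using assms(3) C by (intro integrable_on_powr_bound[where \<beta>="\<alpha> - 1" and C=C]) auto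
qed

lemma bounded_near:
  fixes F :: "real \<Rightarrow> real \<Rightarrow> real"
  assumes "open I" "p0 \<in> I" "continuous_on (I \<times> UNIV) (\<lambda>(p, y). F p y)"
  obtains J M where "open J" "convex J" "p0 \<in> J" "J \<subseteq> I"
    and "\<And>p y. p \<in> J \<Longrightarrow> y \<in> {-pi..pi} \<Longrightarrow> \<bar>F p y\<bar> \<le> M"
proof -
  obtain e where e: "e > 0" "ball p0 e \<subseteq> I"
    using assms(1,2) openE by blast
  define J where "J = {p0 - e / 2<..<p0 + e / 2}"
  have "closure J \<subseteq> ball p0 e"
    using e(1) by (auto simp: J_def dist_real_def)
  then have J: "open J" "convex J" "p0 \<in> J" "closure J \<subseteq> I"
    using e by (auto simp: J_def)
  have "compact (closure J \<times> {-pi..pi})"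
    by (simp add: J_def compact_Times)
  moreover have "continuous_on (closure J \<times> {-pi..pi}) (\<lambda>(p, y). F p y)"
    by (rule continuous_on_subset[OF assms(3)]) (use J in auto)
  ultimately have "bounded ((\<lambda>(p, y). F p y) ` (closure J \<times> {-pi..pi}))"
    by (intro compact_imp_bounded compact_continuous_image)
  then obtain M where "\<forall>q\<in>(\<lambda>(p, y). F p y) ` (closure J \<times> {-pi..pi}). \<bar>q\<bar> \<le> M"
    unfolding bounded_real by blast
  then have "\<bar>F p y\<bar> \<le> M" if "p \<in> J" "y \<in> {-pi..pi}" for p y
    using that closure_subset[of J] by auto
  with J closure_subset[of J] that show ?thesis
    by blast
qed

lemma has_real_derivative_pv_odd_kernel:
  assumes h: "continuous_on UNIV h" "\<And>r. \<bar>h r\<bar> \<le> 1" and \<alpha>: "\<alpha> < 2"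
    and I: "open I" "p0 \<in> I" and R: "smooth2_on (I \<times> UNIV) R"
  shows "((\<lambda>p. pv_torus (\<lambda>z. odd_kernel h \<alpha> z * R p z)) has_real_derivative
           pv_torus (\<lambda>z. odd_kernel h \<alpha> z * dt R p0 z)) (at p0)"
proof -
  define sym where "sym g z = odd_kernel h \<alpha> z * g z + odd_kernel h \<alpha> (-z) * g (-z)" for g z
  have S: "open (I \<times> (UNIV :: real set))"
    using I(1) by (simp add: open_Times)
  note R0 = smooth2_onD[OF S R] and R1 = smooth2_onD[OF S R0(1)]
  have slice: "continuous_on UNIV (dx F p)" if "smooth2_on (I \<times> UNIV) F" "p \<in> I" for F p
    by (rule continuous_on_slice[OF smooth2_onD(5)[OF S smooth2_onD(2)[OF S that(1)]] that(2)])
  have pv: "pv_torus (\<lambda>z. odd_kernel h \<alpha> z * F p z) = integral {0..pi} (sym (F p))"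
    and int: "sym (F p) integrable_on {0..pi}"
    if "smooth2_on (I \<times> UNIV) F" "p \<in> I" for F p
  proof -
    have dF: "(F p has_real_derivative dx F p y) (at y)" for y
      using smooth2_onD(4)[OF S that(1)] that(2) by simp
    show "pv_torus (\<lambda>z. odd_kernel h \<alpha> z * F p z) = integral {0..pi} (sym (F p))"
      unfolding sym_def by (rule pv_torus_eqI[OF tendsto_trunc_int_odd_kernel[OF h \<alpha> dF slice[OF that]]])
    show "sym (F p) integrable_on {0..pi}"
      unfolding sym_def by (rule integrable_on_odd_kernel_symmetric[OF h \<alpha> dF slice[OF that]])
  qed
  obtain J M where J: "open J" "convex J" "p0 \<in> J" "J \<subseteq> I"
    and M: "\<And>p y. p \<in> J \<Longrightarrow> y \<in> {-pi..pi} \<Longrightarrow> \<bar>dx (dt R) p y\<bar> \<le> M"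
    using bounded_near[OF I smooth2_onD(5)[OF S R1(2)]] by blast
  have JI: "p \<in> I" if "p \<in> J" for p
    using that J(4) by blast
  have "((\<lambda>p. integral {0..pi} (sym (R p))) has_real_derivative integral {0..pi} (sym (dt R p0))) (at p0)"
  proof (rule has_real_derivative_integral_dominated[OF J(1-3)])
    show "sym (R p) integrable_on {0..pi}" if "p \<in> J" for p
      using int[OF R] that J(4) closure_subset by blast
    show "((\<lambda>q. sym (R q) z) has_real_derivative sym (dt R p) z) (at p)" if "p \<in> J" for p z
      unfolding sym_def by (intro DERIV_add DERIV_cmult R0(3)) (use JI[OF that] in auto)
    show "(\<lambda>z. 2 * M * z powr (-(\<alpha> - 1))) integrable_on {0..pi}"
      using has_integral_mult_right[OF has_integral_powr_from_0[of "-(\<alpha> - 1)" pi], of "2 * M"] \<alpha>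
      by (auto intro: has_integral_integrable)
    show "\<bar>sym (dt R p) z\<bar> \<le> 2 * M * z powr (-(\<alpha> - 1))" if "p \<in> J" "z \<in> {0..pi}" for p z
    proof (cases "z = 0")
      case False
      have "(dt R p has_real_derivative dx (dt R) p y) (at y)" for y
        using R1(4) JI[OF that(1)] by simp
      then show ?thesis
        unfolding sym_def using that False M h(2)
        by (intro odd_kernel_symmetric_bound[where h=h and g="dt R p"]) auto
    qed (simp add: sym_def)
  qed
  then show ?thesis
    unfolding pv[OF R0(1) I(2)]
    by (rule has_field_derivative_transform_within_open[OF _ J(1,3)]) (use pv[OF R] JI in auto)
qed

section \<open>The topological model\<close>

locale topological_model =
  fixes \<rho> u :: "real \<Rightarrow> real \<Rightarrow> real" and h :: "real \<Rightarrow> real" and \<alpha> T :: real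
  assumes h_cont: "continuous_on UNIV h" and h_bound: "\<And>r. \<bar>h r\<bar> \<le> 1" and alpha: "\<alpha> < 2"
    and rho_smooth: "smooth2_on ({0<..<T} \<times> UNIV) \<rho>"
    and u_smooth: "smooth2_on ({0<..<T} \<times> UNIV) u"
    and rho_pos: "\<And>t x. 0 < t \<Longrightarrow> t < T \<Longrightarrow> \<rho> t x > 0"
    and mass: "\<And>t x. 0 < t \<Longrightarrow> t < T \<Longrightarrow> dt \<rho> t x + dx (\<lambda>s y. \<rho> s y * u s y) t x = 0"
    and momentum: "\<And>t x. 0 < t \<Longrightarrow> t < T \<Longrightarrow>
          ((\<lambda>\<epsilon>. trunc_int \<epsilon>
              (\<lambda>z. phi_top h \<alpha> \<rho> t x (x + z) * (u t (x + z) - u t x) * \<rho> t (x + z)))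
           \<longlongrightarrow> dt u t x + u t x * dx u t x) (at_right 0)"
begin

abbreviation flux :: "real \<Rightarrow> real \<Rightarrow> real"
  where "flux \<equiv> \<lambda>s y. \<rho> s y * u s y"

abbreviation kernel_pv :: "(real \<Rightarrow> real \<Rightarrow> real) \<Rightarrow> real \<Rightarrow> real \<Rightarrow> real"
  where "kernel_pv f t x \<equiv> pv_torus (\<lambda>z. odd_kernel h \<alpha> z * density_quotient \<rho> f t x z)"

lemma open_domain: "open ({0<..<T} \<times> (UNIV :: real set))"
  by (simp add: open_Times)

lemma flux_smooth: "smooth2_on ({0<..<T} \<times> UNIV) flux"
  by (rule smooth2_on_mult[OF open_domain rho_smooth u_smooth])

lemma rho_slice:
  assumes "0 < t" "t < T"
  shows "continuous_on UNIV (\<rho> t)"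
  using continuous_on_slice[OF smooth2_onD(5)[OF open_domain rho_smooth]] assms by simp

lemma density_quotient_space_smooth:
  assumes "0 < t" "t < T" "smooth2_on ({0<..<T} \<times> UNIV) f"
  shows "smooth2_on (UNIV \<times> UNIV) (density_quotient \<rho> f t)"
  using assms rho_pos by (intro smooth2_on_density_quotient_space[OF _ rho_smooth]) auto

lemma density_quotient_time_smooth:
  assumes "smooth2_on ({0<..<T} \<times> UNIV) f"
  shows "smooth2_on ({0<..<T} \<times> UNIV) (\<lambda>t. density_quotient \<rho> f t x)"
  using assms rho_pos by (intro smooth2_on_density_quotient_time[OF _ _ rho_smooth]) auto

lemma kernel_integrand_eq:
  assumes "0 < t" "t < T" "smooth2_on ({0<..<T} \<times> UNIV) f"
  shows "phi_top h \<alpha> \<rho> t x (x + z) * (f t (x + z) - f t x)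
           = odd_kernel h \<alpha> z * density_quotient \<rho> f t x z"
  using assms rho_pos smooth2_onD(4)[OF open_domain assms(3)]
  by (intro phi_top_mult_diff_eq rho_slice) auto

lemma kernel_integrand_C1:
  assumes "0 < t" "t < T" "smooth2_on ({0<..<T} \<times> UNIV) f"
  shows "(density_quotient \<rho> f t x has_real_derivative dx (density_quotient \<rho> f t) x z) (at z)"
    and "continuous_on UNIV (dx (density_quotient \<rho> f t) x)"
proof -
  have S: "open (UNIV \<times> (UNIV :: real set))"
    by simp
  note Q = density_quotient_space_smooth[OF assms]
  show "(density_quotient \<rho> f t x has_real_derivative dx (density_quotient \<rho> f t) x z) (at z)"
    using smooth2_onD(4)[OF S Q] by simp
  show "continuous_on UNIV (dx (density_quotient \<rho> f t) x)"
    by (rule continuous_on_slice[OF smooth2_onD(5)[OF S smooth2_onD(2)[OF S Q]]]) simp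
qed

lemma tendsto_trunc_int_kernel:
  assumes "0 < t" "t < T" "smooth2_on ({0<..<T} \<times> UNIV) f"
  shows "((\<lambda>\<epsilon>. trunc_int \<epsilon> (\<lambda>z. odd_kernel h \<alpha> z * density_quotient \<rho> f t x z)) \<longlongrightarrow> kernel_pv f t x)
           (at_right 0)"
proof -
  note lim = tendsto_trunc_int_odd_kernel[OF h_cont h_bound alpha kernel_integrand_C1[OF assms]]
  show ?thesis
    unfolding pv_torus_eqI[OF lim] by (rule lim)
qed

lemma L_op_eq:
  assumes "0 < t" "t < T"
  shows "L_op (phi_top h \<alpha> \<rho> t) (\<rho> t) x = kernel_pv \<rho> t x"
  using kernel_integrand_eq[OF assms rho_smooth] by (simp add: L_op_def)

lemma u_mult_e_eq:
  assumes "0 < t" "t < T"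
  shows "u t x * (dx u t x + kernel_pv \<rho> t x) = kernel_pv flux t x - dt u t x"
proof -
  define K where "K f z = odd_kernel h \<alpha> z * density_quotient \<rho> f t x z" for f z
  have cont: "continuous_on ({-pi..pi} - {0}) (K f)" if "smooth2_on ({0<..<T} \<times> UNIV) f" for f
  proof -
    have "continuous_on UNIV (density_quotient \<rho> f t x)"
      using kernel_integrand_C1(1)[OF assms that]
      by (meson DERIV_isCont continuous_at_imp_continuous_on)
    then show ?thesis
      unfolding K_def[abs_def] by (rule continuous_on_odd_kernel_mult[OF h_cont])
  qed
  have "phi_top h \<alpha> \<rho> t x (x + z) * (u t (x + z) - u t x) * \<rho> t (x + z) = K flux z - u t x * K \<rho> z" for z
    unfolding K_def kernel_integrand_eq[OF assms flux_smooth, symmetric]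
      kernel_integrand_eq[OF assms rho_smooth, symmetric]
    by (simp add: algebra_simps)
  then have "\<forall>\<^sub>F \<epsilon> in at_right 0. trunc_int \<epsilon> (K flux) - u t x * trunc_int \<epsilon> (K \<rho>)
      = trunc_int \<epsilon> (\<lambda>z. phi_top h \<alpha> \<rho> t x (x + z) * (u t (x + z) - u t x) * \<rho> t (x + z))"
    using trunc_int_diff[OF cont[OF flux_smooth] cont[OF rho_smooth]]
    by (intro eventually_at_rightI[of 0 pi]) auto
  moreover have "((\<lambda>\<epsilon>. trunc_int \<epsilon> (K flux) - u t x * trunc_int \<epsilon> (K \<rho>))
      \<longlongrightarrow> kernel_pv flux t x - u t x * kernel_pv \<rho> t x) (at_right 0)"
    unfolding K_def
    by (intro tendsto_intros tendsto_trunc_int_kernel[OF assms flux_smooth]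
              tendsto_trunc_int_kernel[OF assms rho_smooth])
  ultimately have "((\<lambda>\<epsilon>. trunc_int \<epsilon>
        (\<lambda>z. phi_top h \<alpha> \<rho> t x (x + z) * (u t (x + z) - u t x) * \<rho> t (x + z)))
      \<longlongrightarrow> kernel_pv flux t x - u t x * kernel_pv \<rho> t x) (at_right 0)"
    by (rule Lim_transform_eventually[rotated])
  then have "dt u t x + u t x * dx u t x = kernel_pv flux t x - u t x * kernel_pv \<rho> t x"
    by (rule tendsto_unique[OF trivial_limit_at_right_real momentum[OF assms]])
  then show ?thesis
    by (simp add: algebra_simps)
qed

lemma density_quotient_balance:
  assumes t: "0 < t" "t < T"
  shows "dt (density_quotient \<rho> flux t) x z = - dt (\<lambda>t. density_quotient \<rho> \<rho> t x) t z"
proof -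
  have tD: "t \<in> {0<..<T}"
    using t by simp
  note rho = smooth2_onD[OF open_domain rho_smooth] and fl = smooth2_onD[OF open_domain flux_smooth]
  define avg where "avg g = integral {0..1} (\<lambda>s. g (x + s * z))" for g :: "real \<Rightarrow> real"
  have B_pos: "avg (\<rho> t) > 0"
    unfolding avg_def using rho_pos t by (intro segment_integral_pos rho_slice) auto
  have mass_t: "dt \<rho> t = (\<lambda>y. - dx flux t y)"
    using mass[OF t] by (auto simp: add_eq_0_iff)
  have "dx (dt \<rho>) t y = - dx (dx flux) t y" for y
    unfolding dx_def mass_t using fl(2) smooth2_onD(4)[OF open_domain fl(2)] tD
    by (intro DERIV_imp_deriv DERIV_minus) (simp add: dx_def)
  then have mass_tx: "dt (dx \<rho>) t = (\<lambda>y. - dx (dx flux) t y)"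
    using dt_dx_commute[OF _ tD rho_smooth] by auto
  have "((\<lambda>y. density_quotient \<rho> flux t y z) has_real_derivative
      (avg (dx (dx flux) t) * avg (\<rho> t) - avg (dx flux t) * avg (dx \<rho> t)) / (avg (\<rho> t) * avg (\<rho> t))) (at x)"
    unfolding density_quotient_def avg_def
    by (intro DERIV_divide has_real_derivative_segment_integral_space[OF _ _ tD] fl(2) rho_smooth)
       (use B_pos in \<open>auto simp: avg_def\<close>)
  moreover have "((\<lambda>s. density_quotient \<rho> \<rho> s x z) has_real_derivative
      (- avg (dx (dx flux) t) * avg (\<rho> t) + avg (dx flux t) * avg (dx \<rho> t)) / (avg (\<rho> t) * avg (\<rho> t))) (at t)"
  proof -
    have "((\<lambda>s. density_quotient \<rho> \<rho> s x z) has_real_derivative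
        (avg (dt (dx \<rho>) t) * avg (\<rho> t) - avg (dx \<rho> t) * avg (dt \<rho> t)) / (avg (\<rho> t) * avg (\<rho> t))) (at t)"
      unfolding density_quotient_def avg_def
      by (intro DERIV_divide has_real_derivative_segment_integral_time[OF _ _ _ tD] rho(2) rho_smooth)
         (use B_pos in \<open>auto simp: avg_def\<close>)
    moreover have "avg (dt (dx \<rho>) t) = - avg (dx (dx flux) t)" "avg (dt \<rho> t) = - avg (dx flux t)"
      unfolding avg_def mass_tx mass_t by simp_all
    ultimately show ?thesis
      by (simp add: algebra_simps)
  qed
  ultimately show ?thesis
    unfolding dt_def by (simp add: DERIV_imp_deriv minus_divide_left algebra_simps)
qed

lemma pv_density_quotient_balance:
  assumes t: "0 < t" "t < T"
  shows "pv_torus (\<lambda>z. odd_kernel h \<alpha> z * dt (density_quotient \<rho> flux t) x z)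
           = - pv_torus (\<lambda>z. odd_kernel h \<alpha> z * dt (\<lambda>s. density_quotient \<rho> \<rho> s x) t z)"
proof -
  define Rt where "Rt = (\<lambda>s. density_quotient \<rho> \<rho> s x)"
  have tD: "t \<in> {0<..<T}"
    using t by simp
  note Rt = smooth2_onD(1)[OF open_domain density_quotient_time_smooth[OF rho_smooth, of x, folded Rt_def]]
  have "(dt Rt t has_real_derivative dx (dt Rt) t z) (at z)" for z
    using smooth2_onD(4)[OF open_domain Rt] tD by simp
  moreover have "continuous_on UNIV (dx (dt Rt) t)"
    by (rule continuous_on_slice[OF smooth2_onD(5)[OF open_domain smooth2_onD(2)[OF open_domain Rt]] tD])
  ultimately have "((\<lambda>\<epsilon>. trunc_int \<epsilon> (\<lambda>z. odd_kernel h \<alpha> z * dt Rt t z)) \<longlongrightarrow>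
      integral {0..pi} (\<lambda>z. odd_kernel h \<alpha> z * dt Rt t z + odd_kernel h \<alpha> (-z) * dt Rt t (-z)))
      (at_right 0)"
    by (rule tendsto_trunc_int_odd_kernel[OF h_cont h_bound alpha])
  then show ?thesis
    unfolding density_quotient_balance[OF t] Rt_def by (simp add: pv_torus_minus)
qed

lemma e_transport:
  assumes t: "0 < t" "t < T"
  defines "e \<equiv> \<lambda>t x. dx u t x + L_op (phi_top h \<alpha> \<rho> t) (\<rho> t) x"
  shows "\<exists>Et Ex. ((\<lambda>s. e s x) has_real_derivative Et) (at t)
              \<and> ((\<lambda>y. e t y) has_real_derivative Ex) (at x)
              \<and> Et + dx u t x * e t x + u t x * Ex = 0"
proof -
  have tD: "t \<in> {0<..<T}"
    using t by simp
  define Rt where "Rt = (\<lambda>s. density_quotient \<rho> \<rho> s x)"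
  have Rt: "smooth2_on ({0<..<T} \<times> UNIV) Rt"
    unfolding Rt_def by (rule density_quotient_time_smooth[OF rho_smooth])
  note uD = smooth2_onD[OF open_domain u_smooth]
  note uxD = smooth2_onD[OF open_domain uD(2)] and utD = smooth2_onD[OF open_domain uD(1)]
  note pv_space = has_real_derivative_pv_odd_kernel[OF h_cont h_bound alpha open_UNIV UNIV_I
      density_quotient_space_smooth[OF t]]
  have e_eq: "e s y = dx u s y + kernel_pv \<rho> s y" if "s \<in> {0<..<T}" for s y
    using L_op_eq that by (simp add: e_def)
  define Pt where "Pt = pv_torus (\<lambda>z. odd_kernel h \<alpha> z * dt Rt t z)"
  define Ex where "Ex = dx (dx u) t x + pv_torus (\<lambda>z. odd_kernel h \<alpha> z * dt (density_quotient \<rho> \<rho> t) x z)"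
  have "((\<lambda>s. dx u s x + kernel_pv \<rho> s x) has_real_derivative dt (dx u) t x + Pt) (at t)"
    unfolding Pt_def
    using DERIV_add[OF uxD(3)[of t x] has_real_derivative_pv_odd_kernel[OF h_cont h_bound alpha _ tD Rt]] tD
    by (simp add: Rt_def)
  then have Et: "((\<lambda>s. e s x) has_real_derivative dt (dx u) t x + Pt) (at t)"
    by (rule has_field_derivative_transform_within_open[OF _ _ tD]) (auto simp: e_eq)
  have "((\<lambda>y. dx u t y + kernel_pv \<rho> t y) has_real_derivative Ex) (at x)"
    unfolding Ex_def using DERIV_add[OF uxD(4)[of t x] pv_space[OF rho_smooth]] tD by simp
  then have Ex: "((\<lambda>y. e t y) has_real_derivative Ex) (at x)"
    using e_eq[OF tD] by simp
  have "((\<lambda>y. kernel_pv flux t y - dt u t y) has_real_derivative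
      pv_torus (\<lambda>z. odd_kernel h \<alpha> z * dt (density_quotient \<rho> flux t) x z) - dx (dt u) t x) (at x)"
    using DERIV_diff[OF pv_space[OF flux_smooth] utD(4)[of t x]] tD by simp
  moreover have "(\<lambda>y. kernel_pv flux t y - dt u t y) = (\<lambda>y. u t y * e t y)"
    using u_mult_e_eq[OF t] e_eq[OF tD] by simp
  ultimately have "pv_torus (\<lambda>z. odd_kernel h \<alpha> z * dt (density_quotient \<rho> flux t) x z) - dx (dt u) t x
      = dx u t x * e t x + u t x * Ex"
    using DERIV_unique DERIV_mult[OF uD(4)[of t x] Ex] tD by (simp add: mult.commute)
  moreover have "pv_torus (\<lambda>z. odd_kernel h \<alpha> z * dt (density_quotient \<rho> flux t) x z) = - Pt"
    unfolding Pt_def Rt_def by (rule pv_density_quotient_balance[OF t])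
  ultimately show ?thesis
    using Et Ex dt_dx_commute[OF _ tD u_smooth, of x] by (intro exI[of _ "dt (dx u) t x + Pt"] exI[of _ Ex]) auto
qed

lemma mass_expanded:
  assumes "0 < t" "t < T"
  shows "dt \<rho> t x + dx \<rho> t x * u t x + dx u t x * \<rho> t x = 0"
proof -
  have "((\<lambda>y. \<rho> t y * u t y) has_real_derivative dx \<rho> t x * u t x + dx u t x * \<rho> t x) (at x)"
    using DERIV_mult[OF smooth2_onD(4)[OF open_domain rho_smooth, of t x]
                        smooth2_onD(4)[OF open_domain u_smooth, of t x]] assms
    by simp
  then have "dx flux t x = dx \<rho> t x * u t x + dx u t x * \<rho> t x"
    unfolding dx_def by (rule DERIV_imp_deriv)
  with mass[OF assms, of x] show ?thesis
    by linarith
qed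

end

lemma transport_quotient:
  fixes a a' a_x r r' r_x v v_x :: real
  assumes "a' + v_x * a + v * a_x = 0" "r' + r_x * v + v_x * r = 0" "r \<noteq> 0"
  shows "(a' * r - a * r') / (r * r) + v * ((a_x * r - a * r_x) / (r * r)) = 0"
proof -
  have r': "r' = - (r_x * v + v_x * r)"
    using assms(2) by linarith
  have "a' * r - a * r' + v * (a_x * r - a * r_x) = r * (a' + v_x * a + v * a_x)"
    unfolding r' by (simp add: algebra_simps)
  then show ?thesis
    using assms(1,3) by (simp add: add_divide_distrib[symmetric] times_divide_eq_right)
qed

lemma smooth_real_continuous: "smooth_real h \<Longrightarrow> continuous_on UNIV h"
  unfolding smooth_real_def
  by (metis funpow_0 continuous_at_imp_continuous_on differentiable_imp_continuous_within)

theorem mainTheorem6: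
  fixes \<rho> u :: "real \<Rightarrow> real \<Rightarrow> real" and h :: "real \<Rightarrow> real"
    and R0 \<alpha> T :: real
  assumes R0_pos: "R0 > 0"
    and h_smooth: "smooth_real h"
    and h_even: "\<And>r. h (- r) = h r"
    and h_range: "\<And>r. 0 \<le> h r \<and> h r \<le> 1"
    and h_one: "\<And>r. 0 \<le> r \<Longrightarrow> r \<le> R0 \<Longrightarrow> h r = 1"
    and h_zero: "\<And>r. 2 * R0 \<le> r \<Longrightarrow> h r = 0"
    and alpha: "0 < \<alpha>" "\<alpha> < 2"
    and T_pos: "T > 0"
    and rho_smooth: "smooth2_on ({0<..<T} \<times> UNIV) \<rho>"
    and u_smooth: "smooth2_on ({0<..<T} \<times> UNIV) u"
    and rho_per: "\<And>t x. \<rho> t (x + 2 * pi) = \<rho> t x"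
    and u_per: "\<And>t x. u t (x + 2 * pi) = u t x"
    and rho_pos: "\<And>t x. 0 \<le> t \<Longrightarrow> t < T \<Longrightarrow> \<rho> t x > 0"
    and mass: "\<And>t x. 0 < t \<Longrightarrow> t < T \<Longrightarrow>
                 dt \<rho> t x + dx (\<lambda>s y. \<rho> s y * u s y) t x = 0"
    and momentum: "\<And>t x. 0 < t \<Longrightarrow> t < T \<Longrightarrow>
                 ((\<lambda>\<epsilon>. trunc_int \<epsilon>
                     (\<lambda>z. phi_top h \<alpha> \<rho> t x (x + z) * (u t (x + z) - u t x) * \<rho> t (x + z)))
                  \<longlongrightarrow> dt u t x + u t x * dx u t x) (at_right 0)"
  defines "e \<equiv> (\<lambda>t x. dx u t x + L_op (phi_top h \<alpha> \<rho> t) (\<rho> t) x)"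
  defines "q \<equiv> (\<lambda>t x. e t x / \<rho> t x)"
  shows "\<forall>t x. 0 < t \<and> t < T \<longrightarrow>
           (\<exists>D1 D2. ((\<lambda>s. e s x) has_real_derivative D1) (at t)
                  \<and> ((\<lambda>y. u t y * e t y) has_real_derivative D2) (at x)
                  \<and> D1 + D2 = 0)
         \<and> (\<exists>Q1 Q2. ((\<lambda>s. q s x) has_real_derivative Q1) (at t)
                  \<and> ((\<lambda>y. q t y) has_real_derivative Q2) (at x)
                  \<and> Q1 + u t x * Q2 = 0)"
proof (intro allI impI)
  fix t x
  assume t: "0 < t \<and> t < T"
  interpret topological_model \<rho> u h \<alpha> T
    using smooth_real_continuous[OF h_smooth] h_range alpha rho_smooth u_smooth rho_pos mass momentum
    by unfold_locales (auto simp: abs_le_iff)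
  obtain Et Ex where Et: "((\<lambda>s. e s x) has_real_derivative Et) (at t)"
    and Ex: "((\<lambda>y. e t y) has_real_derivative Ex) (at x)"
    and e_transport: "Et + dx u t x * e t x + u t x * Ex = 0"
    using e_transport[of t x] t unfolding e_def by blast
  have tD: "(t, x) \<in> {0<..<T} \<times> UNIV"
    using t by simp
  note rho = smooth2_onD(3,4)[OF open_domain rho_smooth tD] and ux = smooth2_onD(4)[OF open_domain u_smooth tD]
  have "\<rho> t x \<noteq> 0"
    using rho_pos t by (simp add: less_imp_neq[symmetric])
  then show "(\<exists>D1 D2. ((\<lambda>s. e s x) has_real_derivative D1) (at t)
                  \<and> ((\<lambda>y. u t y * e t y) has_real_derivative D2) (at x) \<and> D1 + D2 = 0)
           \<and> (\<exists>Q1 Q2. ((\<lambda>s. q s x) has_real_derivative Q1) (at t)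
                  \<and> ((\<lambda>y. q t y) has_real_derivative Q2) (at x) \<and> Q1 + u t x * Q2 = 0)"
    using Et DERIV_mult[OF ux Ex] e_transport DERIV_divide[OF Et rho(1)] DERIV_divide[OF Ex rho(2)]
      transport_quotient[OF e_transport mass_expanded] t
    unfolding q_def by (fastforce simp: algebra_simps)
qed

end
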